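(* Let $a\ge 2$ be an even integer. For every integer $n\ge 1$, the generalized Fermat number $F_n^{(a)}=a^{2^{n-1}}+1$ is primover to base $a$.
   Context: For an integer $a>1$ and an odd integer $n>1$ with $\gcd(a,n)=1$: $h_a(n)$ denotes the multiplicative order of $a$ modulo $n$. A cyclotomic coset of $a$ modulo $n$ is a set of the form $\{\, s a^j \bmod n : j\ge 0\,\}$ with $s\in\{1,\dots,n-1\}$; these cosets partition $\{1,\dots,n-1\}$, and $r_a(n)$ denotes the number of distinct cyclotomic cosets of $a$ modulo $n$. An odd composite number $n$ coprime to $a$ is called an overpseudoprime to base $a$ if $n=r_a(n)\,h_a(n)+1$. An integer $N>1$ is called primover to base $a$ if it is either prime or an overpseudoprime to base $a$. *)

theory Defs
  imports "HOL-Number_Theory.Number_Theory"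
begin

definition h_ord :: "nat \<Rightarrow> nat \<Rightarrow> nat" where
  "h_ord a n = ord n a"

definition cyc_coset :: "nat \<Rightarrow> nat \<Rightarrow> nat \<Rightarrow> nat set" where
  "cyc_coset a n s = {(s * a ^ j) mod n | j. True}"

definition r_num :: "nat \<Rightarrow> nat \<Rightarrow> nat" where
  "r_num a n = card (cyc_coset a n ` {1..n-1})"

definition overpseudoprime :: "nat \<Rightarrow> nat \<Rightarrow> bool" where
  "overpseudoprime a n \<longleftrightarrow> odd n \<and> n > 1 \<and> \<not> prime n \<and> coprime a n
      \<and> n = r_num a n * h_ord a n + 1"

definition primover :: "nat \<Rightarrow> nat \<Rightarrow> bool" where
  "primover a N \<longleftrightarrow> N > 1 \<and> (prime N \<or> overpseudoprime a N)"

end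

theory Submission
  imports Defs
begin

(*
  (1) Order of a modulo divisors of a generalized Fermat number: for every odd
      divisor M > 1 of a^(2^k) + 1 the order of a modulo M is exactly 2^(k+1).
      Since N is odd, every divisor M > 1 of N has the same order as N itself.

  (2) Counting cyclotomic cosets, for any N > 1 coprime to a: the coset of s
      has ord_{N / gcd(s,N)}(a) elements, and the cosets of 1, ..., N-1
      partition {1..N-1}.  Hence if a has the same order h modulo every divisor
      M > 1 of N, all cosets have h elements and N - 1 = r_a(N) * h.
*)

section \<open>The order of a modulo divisors of a^(2^k) + 1\<close>

text \<open>Any odd divisor M > 1 of a^(2^k) + 1 sees a as an element of order
  exactly 2^(k+1): a^(2^k) is congruent to -1, which is not 1 modulo M.\<close>

lemma ord_dvd_generalized_fermat:
  fixes a M k :: nat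
  assumes "M > 1" and "odd M" and M_dvd: "M dvd a ^ (2 ^ k) + 1"
  shows "ord M a = 2 ^ Suc k"
proof -
  let ?m = "(2::nat) ^ k"
  have "int M dvd int (a ^ ?m + 1)"
    using M_dvd by (simp only: int_dvd_int_iff)
  hence minus_one: "[int a ^ ?m = -1] (mod int M)"
    by (simp add: cong_iff_dvd_diff add.commute)
  have "[(int a ^ ?m) ^ 2 = (-1) ^ 2] (mod int M)"
    using minus_one by (rule cong_pow)
  hence "[int (a ^ 2 ^ Suc k) = int 1] (mod int M)"
    by (simp flip: power_mult add: mult.commute)
  hence "[a ^ 2 ^ Suc k = 1] (mod M)"
    by (simp only: cong_int_iff)
  hence "ord M a dvd 2 ^ Suc k"
    by (simp add: ord_divides')
  then obtain i where i: "i \<le> Suc k" "ord M a = 2 ^ i"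
    using divides_primepow_nat[OF two_is_prime_nat] by blast
  have not_one: "\<not> [a ^ ?m = 1] (mod M)"
  proof
    assume "[a ^ ?m = 1] (mod M)"
    hence "[a ^ ?m + 1 = 1 + 1] (mod M)"
      by (rule cong_add) (rule cong_refl)
    moreover have "[a ^ ?m + 1 = 0] (mod M)"
      using M_dvd by (simp add: cong_0_iff)
    ultimately have "[1 + 1 = 0] (mod M)"
      by (blast intro: cong_trans cong_sym)
    hence "M dvd 1 + 1"
      by (simp only: cong_0_iff)
    hence "M \<le> 1 + 1"
      by (rule dvd_imp_le) simp
    thus False
      using \<open>M > 1\<close> \<open>odd M\<close> by (simp add: le_Suc_eq)
  qed
  have "\<not> i \<le> k"
  proof
    assume "i \<le> k"
    hence "ord M a dvd ?m"
      using i by (simp add: le_imp_power_dvd)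
    thus False
      using not_one by (simp add: ord_divides')
  qed
  hence "i = Suc k"
    using i(1) by simp
  thus ?thesis
    using i(2) by simp
qed

section \<open>Sizes of cyclotomic cosets\<close>

lemma cong_mult_cancel_gcd_nat:
  fixes s x y N :: nat
  assumes "s > 0"
  shows "[s * x = s * y] (mod N) \<longleftrightarrow> [x = y] (mod N div gcd s N)"
proof -
  define d where "d = gcd s N"
  define s' where "s' = s div d"
  define M where "M = N div d"
  have "d > 0"
    using assms by (simp add: d_def)
  have s: "s = d * s'" and N: "N = d * M"
    by (simp_all add: d_def s'_def M_def)
  have "coprime s' M"
    using div_gcd_coprime[of s N] assms by (simp add: d_def s'_def M_def)
  have "[s * x = s * y] (mod N) \<longleftrightarrow> d * (s' * x mod M) = d * (s' * y mod M)"
    unfolding s N cong_def mult_mod_right mult.assoc ..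
  also have "\<dots> \<longleftrightarrow> [s' * x = s' * y] (mod M)"
    using \<open>d > 0\<close> by (simp add: cong_def)
  also have "\<dots> \<longleftrightarrow> [x = y] (mod M)"
    using \<open>coprime s' M\<close> by (rule cong_mult_lcancel_nat)
  finally show ?thesis
    by (simp add: M_def d_def)
qed

text \<open>The coset of s modulo N has exactly ord_{N / gcd(s,N)}(a) elements:
  s a^i and s a^j agree modulo N iff i and j agree modulo that order.\<close>

lemma card_cyc_coset:
  fixes a N s :: nat
  assumes "coprime a N" and "s > 0"
  shows "card (cyc_coset a N s) = ord (N div gcd s N) a"
proof -
  define M where "M = N div gcd s N"
  define h where "h = ord M a"
  define f where "f = (\<lambda>j. s * a ^ j mod N)"
  have "N = gcd s N * M"
    by (simp add: M_def)
  hence "coprime M a"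
    using assms(1) by (metis coprime_commute coprime_mult_right_iff)
  hence "h > 0"
    by (simp add: h_def)
  have f_eq: "f i = f j \<longleftrightarrow> [i = j] (mod h)" for i j
  proof -
    have "f i = f j \<longleftrightarrow> [a ^ i = a ^ j] (mod M)"
      using cong_mult_cancel_gcd_nat[OF assms(2)] by (simp add: f_def cong_def M_def)
    also have "\<dots> \<longleftrightarrow> [i = j] (mod h)"
      using \<open>coprime M a\<close> by (simp add: order_divides_expdiff h_def)
    finally show ?thesis .
  qed
  have "cyc_coset a N s = range f"
    by (auto simp: cyc_coset_def f_def)
  also have "\<dots> = f ` {..<h}"
  proof (intro equalityI subsetI)
    fix x assume "x \<in> range f"
    then obtain j where "x = f j" by blast
    moreover have "f j = f (j mod h)"
      using f_eq by (simp add: cong_def)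
    moreover have "j mod h < h"
      using \<open>h > 0\<close> by simp
    ultimately show "x \<in> f ` {..<h}" by blast
  qed auto
  finally have coset: "cyc_coset a N s = f ` {..<h}" .
  have "inj_on f {..<h}"
    by (intro inj_onI) (auto simp: f_eq cong_def)
  thus ?thesis
    using coset by (simp add: card_image h_def M_def)
qed

lemma cyc_coset_trans:
  assumes "x \<in> cyc_coset a N s"
  shows "cyc_coset a N x \<subseteq> cyc_coset a N s"
proof
  fix y assume "y \<in> cyc_coset a N x"
  then obtain j where y: "y = x * a ^ j mod N"
    by (auto simp: cyc_coset_def)
  obtain i where x: "x = s * a ^ i mod N"
    using assms by (auto simp: cyc_coset_def)
  have "y = s * a ^ (i + j) mod N"
    using x y by (simp add: mod_mult_left_eq power_add mult.assoc)
  thus "y \<in> cyc_coset a N s"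
    unfolding cyc_coset_def by blast
qed

context
  fixes a N :: nat
  assumes coprime_aN: "coprime a N" and N_gt_1: "N > 1"
begin

text \<open>Since a is a unit modulo N, multiplying by powers of a never produces 0.\<close>

lemma cyc_coset_subset:
  assumes "s \<in> {1..N-1}"
  shows "cyc_coset a N s \<subseteq> {1..N-1}"
proof
  fix x assume "x \<in> cyc_coset a N s"
  then obtain j where x: "x = s * a ^ j mod N"
    by (auto simp: cyc_coset_def)
  have "\<not> N dvd s"
    using assms by (auto dest: dvd_imp_le)
  moreover have "coprime N (a ^ j)"
    using coprime_aN by (simp add: coprime_commute)
  ultimately have "\<not> N dvd s * a ^ j"
    by (simp add: coprime_dvd_mult_left_iff)
  thus "x \<in> {1..N-1}"
    using x N_gt_1 by (auto simp: dvd_eq_mod_eq_0 less_Suc_eq_le[symmetric])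
qed

lemma cyc_coset_self:
  assumes "s < N"
  shows "s \<in> cyc_coset a N s"
proof -
  have "s = s * a ^ 0 mod N"
    using assms by simp
  thus ?thesis
    unfolding cyc_coset_def by blast
qed

text \<open>The cosets are orbits: every member of a coset generates the same coset.
  The inclusion back uses a^(ord_N(a)) = 1 modulo N to invert powers of a.\<close>

lemma cyc_coset_eq:
  assumes "x \<in> cyc_coset a N s" and "s < N"
  shows "cyc_coset a N x = cyc_coset a N s"
proof -
  obtain i where x: "x = s * a ^ i mod N"
    using assms(1) by (auto simp: cyc_coset_def)
  have shift: "x * a ^ j mod N = s * a ^ (i + j) mod N" for j
    using x by (simp add: mod_mult_left_eq power_add mult.assoc)
  define h where "h = ord N a"
  have "h > 0"
    using coprime_aN by (simp add: h_def coprime_commute)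
  have "[a ^ (h * i) = 1 ^ i] (mod N)"
    unfolding power_mult h_def by (intro cong_pow ord)
  hence "[s * a ^ (i + i * (h - 1)) = s * 1] (mod N)"
    using \<open>h > 0\<close> by (intro cong_mult cong_refl) (simp add: algebra_simps)
  hence "s = x * a ^ (i * (h - 1)) mod N"
    using assms(2) by (simp add: shift cong_def)
  hence "s \<in> cyc_coset a N x"
    unfolding cyc_coset_def by blast
  thus ?thesis
    using assms(1) by (intro equalityI cyc_coset_trans)
qed

text \<open>If all cosets have the same size h, the partition of {1..N-1} into
  r_a(N) cosets gives N - 1 = r_a(N) * h.\<close>

lemma r_num_uniform_coset_size:
  assumes size: "\<And>s. s \<in> {1..N-1} \<Longrightarrow> card (cyc_coset a N s) = h"
  shows "N = r_num a N * h + 1"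
proof -
  let ?C = "cyc_coset a N ` {1..N-1}"
  have union: "\<Union>?C = {1..N-1}"
  proof
    show "\<Union>?C \<subseteq> {1..N-1}"
      using cyc_coset_subset by blast
    show "{1..N-1} \<subseteq> \<Union>?C"
    proof
      fix s assume "s \<in> {1..N-1}"
      moreover have "s \<in> cyc_coset a N s"
        using \<open>s \<in> {1..N-1}\<close> N_gt_1 by (intro cyc_coset_self) auto
      ultimately show "s \<in> \<Union>?C" by blast
    qed
  qed
  have disjoint: "c1 \<inter> c2 = {}"
    if c1: "c1 \<in> ?C" and c2: "c2 \<in> ?C" and distinct: "c1 \<noteq> c2" for c1 c2
  proof (rule ccontr)
    assume "c1 \<inter> c2 \<noteq> {}"
    then obtain x where x: "x \<in> c1" "x \<in> c2" by blast
    obtain s t where s: "s \<in> {1..N-1}" "c1 = cyc_coset a N s"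
      and t: "t \<in> {1..N-1}" "c2 = cyc_coset a N t"
      using c1 c2 by blast
    have "s < N" "t < N"
      using s(1) t(1) N_gt_1 by auto
    hence "c1 = cyc_coset a N x" "c2 = cyc_coset a N x"
      using cyc_coset_eq[of x s] cyc_coset_eq[of x t] x s(2) t(2) by simp_all
    thus False
      using distinct by simp
  qed
  have "h * card ?C = card (\<Union>?C)"
  proof (rule card_partition)
    show "finite ?C" by simp
    show "finite (\<Union>?C)" unfolding union by simp
    show "card c = h" if "c \<in> ?C" for c
      using that size by blast
    show "c1 \<inter> c2 = {}" if "c1 \<in> ?C" "c2 \<in> ?C" "c1 \<noteq> c2" for c1 c2
      using that by (rule disjoint)
  qed
  also have "\<dots> = N - 1"
    unfolding union by simp
  finally show ?thesis
    using N_gt_1 by (simp add: r_num_def mult.commute)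
qed

lemma r_num_uniform_order:
  assumes same_ord: "\<And>M. M > 1 \<Longrightarrow> M dvd N \<Longrightarrow> ord M a = ord N a"
  shows "N = r_num a N * h_ord a N + 1"
proof (rule r_num_uniform_coset_size)
  fix s assume s: "s \<in> {1..N-1}"
  define g where "g = gcd s N"
  have factor: "g * (N div g) = N"
    by (simp add: g_def)
  have "g \<le> s"
    using s by (simp add: g_def gcd_le1_nat)
  hence "g < N"
    using s N_gt_1 by auto
  have "\<not> N div g \<le> 1"
  proof
    assume "N div g \<le> 1"
    hence "g * (N div g) \<le> g * 1"
      by (rule mult_le_mono2)
    thus False
      using \<open>g < N\<close> factor by simp
  qed
  moreover have "N div g dvd N"
    using factor by (metis dvd_triv_right)
  ultimately have "ord (N div g) a = ord N a"
    by (intro same_ord) simp_all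
  thus "card (cyc_coset a N s) = h_ord a N"
    using card_cyc_coset[OF coprime_aN] s by (simp add: g_def h_ord_def)
qed

end

theorem theorem5:
  fixes a n :: nat
  assumes "a \<ge> 2" and "even a" and "n \<ge> 1"
  shows "primover a (a ^ (2 ^ (n - 1)) + 1)"
proof -
  define N where "N = a ^ (2 ^ (n - 1)) + 1"
  have "odd N"
    using assms(2) by (simp add: N_def)
  have "N > 1"
    using assms(1) by (simp add: N_def)
  have "coprime (a ^ 2 ^ (n - 1)) N"
    by (simp add: N_def)
  hence "coprime a N"
    by simp
  have ord_divisor: "ord M a = 2 ^ n" if "M > 1" "M dvd N" for M
  proof -
    have "odd M"
      using \<open>odd N\<close> that(2) by (blast intro: dvd_trans)
    thus ?thesis
      using ord_dvd_generalized_fermat[OF that(1) _ that(2)[unfolded N_def]] assms(3)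
      by simp
  qed
  have "ord N a = 2 ^ n"
    using \<open>N > 1\<close> by (simp add: ord_divisor)
  hence "N = r_num a N * h_ord a N + 1"
    using \<open>coprime a N\<close> \<open>N > 1\<close>
    by (intro r_num_uniform_order) (simp_all add: ord_divisor)
  thus ?thesis
    using \<open>odd N\<close> \<open>N > 1\<close> \<open>coprime a N\<close>
    by (auto simp: primover_def overpseudoprime_def N_def)
qed

end
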